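(* Let $S$ be a Gröbner–Shirshov basis in $K\langle X;\Omega\rangle$ (with respect to a fixed monomial ordering $>$ on $\mathfrak{S}(X)$). Let $u_1,u_2\in\mathfrak{S}^\star(X)$ and $s_1,s_2\in S$ be such that $w=u_1|_{\overline{s_1}}=u_2|_{\overline{s_2}}$. Then $$u_1|_{s_1}\equiv u_2|_{s_2}\ \ \mathrm{mod}\,(S,w).$$
   Context: General setup. $K$ is a commutative ring with unit, $X$ a set, and $\Omega=\bigcup_{n\ge1}\Omega_n$ a set of operation symbols, $\Omega_n$ being the $n$-ary ones. For a set $A$ let $\Omega(A)=\{\delta(u_1,\dots,u_t)\mid t\ge1,\ \delta\in\Omega_t,\ u_i\in A\}$ (formal expressions). For a set $Y$, $S(Y)$ denotes the free semigroup (nonempty words) and $Y^*$ the free monoid on $Y$. Put $\mathfrak{S}_0=S(X)$ and $\mathfrak{S}_n=S(X\cup\Omega(\mathfrak{S}_{n-1}))$ for $n\ge1$; then $\mathfrak{S}_0\subset\mathfrak{S}_1\subset\cdots$ and $\mathfrak{S}(X)=\bigcup_{n\ge0}\mathfrak{S}_n$ (the $\Omega$-words). $K\langle X;\Omega\rangle$ is the free $K$-module with basis $\mathfrak{S}(X)$, with associative multiplication given by concatenation and each $\delta\in\Omega_n$ extended $K$-multilinearly; it is the free associative algebra with multiple linear operators $\Omega$ on $X$; its elements are $\Omega$-polynomials. The prime $\Omega$-words are the elements of $X\cup\Omega(\mathfrak{S}(X))$; each $u\in\mathfrak{S}(X)$ is uniquely a product $u_1\cdots u_n$ of prime $\Omega$-words,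 and $bre(u)=n$. For a symbol $\star\notin X$, $\mathfrak{S}^\star(X)$ is the set of elements of $\mathfrak{S}(X\cup\{\star\})$ containing exactly one occurrence of $\star$; for $u\in\mathfrak{S}^\star(X)$ and an $\Omega$-polynomial $s$, $u|_s$ denotes the result of replacing $\star$ by $s$ (extended linearly in $s$). A monomial ordering is a well ordering $>$ on $\mathfrak{S}(X)$ such that $w>v$ implies $u|_w>u|_v$ for all $u\in\mathfrak{S}^\star(X)$. For nonzero $f$, $\bar f$ is its largest $\Omega$-word; $f$ is monic if the coefficient of $\bar f$ is $1$. The ideal $Id(S)$ generated by a set $S$ is the $K$-span of all $u|_s$ with $u\in\mathfrak{S}^\star(X)$, $s\in S$, and $K\langle X;\Omega|S\rangle=K\langle X;\Omega\rangle/Id(S)$. For monic $f,g$: (I) if $w=\bar f a=b\bar g$ for some $a,b\in\mathfrak{S}(X)$ with $bre(w)<bre(\bar f)+bre(\bar g)$, then $(f,g)_w=fa-bg$ is an intersection composition; (II) if $w=\bar f=u|_{\bar g}$ for some $u\in\mathfrak{S}^\star(X)$, then $(f,g)_w=f-u|_g$ is an including composition. For a set $S$ of monic $\Omega$-polynomials, an $\Omega$-word $w$, and $\Omega$-polynomials $p,q$, we write $p\equiv q\ \mathrm{mod}(S,w)$ if $p-q=\sum_i\alpha_iu_i|_{s_i}$ with $\alpha_i\in K$, $u_i\in\mathfrak{S}^\star(X)$, $s_i\in S$ and $u_i|_{\overline{s_i}}<w$ for all $i$. $S$ is a Gröbner–Shirshov basis if every composition $(f,g)_w$ with $f,g\in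 S$ satisfies $(f,g)_w\equiv0\ \mathrm{mod}(S,w)$. *)

theory Defs
  imports Main "HOL-Library.Poly_Mapping"
begin

text \<open>Omega_n = {d. ar d = n}; symbols of arity 0 are never usable (t >= 1).
  A prime Omega-word is a letter or d(u_1,...,u_t); an Omega-word is a nonempty
  list of prime Omega-words (its length is bre).\<close>

datatype ('x, 'o) prm = Var 'x | App 'o "('x, 'o) prm list list"

type_synonym ('x, 'o) word = "('x, 'o) prm list"

inductive wfp :: "('o \<Rightarrow> nat) \<Rightarrow> ('x, 'o) prm \<Rightarrow> bool"
  and wfw :: "('o \<Rightarrow> nat) \<Rightarrow> ('x, 'o) word \<Rightarrow> bool"
  for ar :: "'o \<Rightarrow> nat" where
  wfp_Var: "wfp ar (Var x)"
| wfp_App: "ar d \<ge> 1 \<Longrightarrow> length ws = ar d \<Longrightarrow> list_all (wfw ar) ws \<Longrightarrow> wfp ar (App d ws)"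
| wfw_word: "ps \<noteq> [] \<Longrightarrow> list_all (wfp ar) ps \<Longrightarrow> wfw ar ps"
monos list.pred_mono

text \<open>The letter None plays the role of the symbol star.\<close>

primrec star_count :: "('x option, 'o) prm \<Rightarrow> nat" where
  "star_count (Var x) = (if x = None then 1 else 0)"
| "star_count (App d ws) = sum_list (map sum_list (map (map star_count) ws))"

definition star_word :: "('o \<Rightarrow> nat) \<Rightarrow> ('x option, 'o) word \<Rightarrow> bool" where
  "star_word ar u \<longleftrightarrow> wfw ar u \<and> sum_list (map star_count u) = 1"

primrec substp :: "('x option, 'o) prm \<Rightarrow> ('x, 'o) word \<Rightarrow> ('x, 'o) word" where
  "substp (Var x) v = (case x of None \<Rightarrow> v | Some y \<Rightarrow> [Var y])"
| "substp (App d ws) v = [App d (map concat (map (map (\<lambda>p. substp p v)) ws))]"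

definition subst :: "('x option, 'o) word \<Rightarrow> ('x, 'o) word \<Rightarrow> ('x, 'o) word" where
  "subst u v = concat (map (\<lambda>p. substp p v) u)"

definition emb :: "('x, 'o) word \<Rightarrow> ('x option, 'o) word" where
  "emb a = map (map_prm Some id) a"

type_synonym ('x, 'o, 'k) opoly = "('x, 'o) word \<Rightarrow>\<^sub>0 'k"

definition is_opoly :: "('o \<Rightarrow> nat) \<Rightarrow> ('x, 'o, 'k::zero) opoly \<Rightarrow> bool" where
  "is_opoly ar f \<longleftrightarrow> (\<forall>v\<in>Poly_Mapping.keys f. wfw ar v)"

definition subst_poly :: "('x option, 'o) word \<Rightarrow> ('x, 'o, 'k::comm_ring_1) opoly \<Rightarrow> ('x, 'o, 'k) opoly" where
  "subst_poly u s = (\<Sum>v\<in>Poly_Mapping.keys s. Poly_Mapping.single (subst u v) (Poly_Mapping.lookup s v))"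

definition smult_op :: "'k::comm_ring_1 \<Rightarrow> ('x, 'o, 'k) opoly \<Rightarrow> ('x, 'o, 'k) opoly" where
  "smult_op a f = Poly_Mapping.map ((*) a) f"

definition monomial_order :: "('o \<Rightarrow> nat) \<Rightarrow> (('x, 'o) word \<Rightarrow> ('x, 'o) word \<Rightarrow> bool) \<Rightarrow> bool" where
  "monomial_order ar lt \<longleftrightarrow>
     (\<forall>v. wfw ar v \<longrightarrow> \<not> lt v v) \<and>
     (\<forall>u v w. wfw ar u \<and> wfw ar v \<and> wfw ar w \<and> lt u v \<and> lt v w \<longrightarrow> lt u w) \<and>
     (\<forall>v w. wfw ar v \<and> wfw ar w \<longrightarrow> lt v w \<or> v = w \<or> lt w v) \<and>
     wf {(v, w). wfw ar v \<and> wfw ar w \<and> lt v w} \<and>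
     (\<forall>u v w. star_word ar u \<and> wfw ar v \<and> wfw ar w \<and> lt v w \<longrightarrow> lt (subst u v) (subst u w))"

definition lead :: "(('x, 'o) word \<Rightarrow> ('x, 'o) word \<Rightarrow> bool) \<Rightarrow> ('x, 'o, 'k::zero) opoly \<Rightarrow> ('x, 'o) word" where
  "lead lt f = (THE w. w \<in> Poly_Mapping.keys f \<and> (\<forall>v\<in>Poly_Mapping.keys f. v \<noteq> w \<longrightarrow> lt v w))"

definition monic :: "(('x, 'o) word \<Rightarrow> ('x, 'o) word \<Rightarrow> bool) \<Rightarrow> ('x, 'o, 'k::comm_ring_1) opoly \<Rightarrow> bool" where
  "monic lt f \<longleftrightarrow> f \<noteq> 0 \<and> Poly_Mapping.lookup f (lead lt f) = 1"

definition cong_mod :: "('o \<Rightarrow> nat) \<Rightarrow> (('x, 'o) word \<Rightarrow> ('x, 'o) word \<Rightarrow> bool) \<Rightarrow>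
    ('x, 'o, 'k::comm_ring_1) opoly set \<Rightarrow> ('x, 'o) word \<Rightarrow> ('x, 'o, 'k) opoly \<Rightarrow> ('x, 'o, 'k) opoly \<Rightarrow> bool" where
  "cong_mod ar lt S w p q \<longleftrightarrow>
     (\<exists>ts. p - q = (\<Sum>(a, u, s)\<leftarrow>ts. smult_op a (subst_poly u s)) \<and>
           (\<forall>(a, u, s)\<in>set ts. star_word ar u \<and> s \<in> S \<and> lt (subst u (lead lt s)) w))"

definition GSB :: "('o \<Rightarrow> nat) \<Rightarrow> (('x, 'o) word \<Rightarrow> ('x, 'o) word \<Rightarrow> bool) \<Rightarrow>
    ('x, 'o, 'k::comm_ring_1) opoly set \<Rightarrow> bool" where
  "GSB ar lt S \<longleftrightarrow>
     (\<forall>s\<in>S. is_opoly ar s \<and> monic lt s) \<and>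
     \<comment> \<open>intersection compositions\<close>
     (\<forall>f\<in>S. \<forall>g\<in>S. \<forall>a b w. wfw ar a \<and> wfw ar b \<and>
         w = lead lt f @ a \<and> w = b @ lead lt g \<and>
         length w < length (lead lt f) + length (lead lt g) \<longrightarrow>
         cong_mod ar lt S w (subst_poly (Var None # emb a) f - subst_poly (emb b @ [Var None]) g) 0) \<and>
     \<comment> \<open>including compositions\<close>
     (\<forall>f\<in>S. \<forall>g\<in>S. \<forall>u w. star_word ar u \<and> w = lead lt f \<and> w = subst u (lead lt g) \<longrightarrow>
         cong_mod ar lt S w (f - subst_poly u g) 0)"

end

theory Submission
  imports Defs
begin

text \<open>
  A star word u is the same thing as a context c
  (an Omega-word with one hole), and u|_v is the filling of the hole by v.  Two occurrences
  of leading words in the same word w are then in one of three relative positions: one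
  contains the other (an including composition of S is relevant), they are disjoint (the
  two leading words sit in different holes of a two-hole context), or they overlap at top
  level inside one subword (an intersection composition is relevant).  Then it introduces the K-module of
  combinations of terms a * u|_s whose leading word lies strictly below a bound W, shows
  that this module is carried into the one below c|_W by any context c (by compatibility
  of the monomial ordering with contexts), and treats the three cases: the including and
  intersection cases follow from the Groebner-Shirshov property placed in the outer
  context, while the disjoint case is an identity in which both sides expand into the same
  double sum over the supports of s1 and s2.
\<close>

lemma wfw_iff: "wfw ar ps \<longleftrightarrow> ps \<noteq> [] \<and> list_all (wfp ar) ps"
  by (auto elim: wfw.cases intro: wfw_word)

lemma wfp_App_iff:
  "wfp ar (App d ws) \<longleftrightarrow> 1 \<le> ar d \<and> length ws = ar d \<and> list_all (wfw ar) ws"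
  by (auto elim: wfp.cases intro: wfp_App)

lemma wf_map_prm:
  shows "wfp ar p \<Longrightarrow> wfp ar (map_prm f id p)"
    and "wfw ar ps \<Longrightarrow> wfw ar (map (map_prm f id) ps)"
proof (induction rule: wfp_wfw.inducts)
  case (wfp_Var x)
  show ?case by (simp add: wfp_wfw.intros(1))
next
  case (wfp_App d ws)
  then show ?case by (auto simp: wfp_App_iff list.pred_map list_all_iff)
next
  case (wfw_word ps)
  then show ?case by (auto simp: wfw_iff list.pred_map list_all_iff)
qed

section \<open>Contexts\<close>

text \<open>A context is an Omega-word with one hole: either the hole sits at top level between
  the words a and b, or inside argument number length ws1 of a prime d(...) that sits
  between a and b.  fill c v puts v into the hole, valid expresses well-formedness and
  toword c is the star word representing c.\<close>

datatype ('x, 'o) ctx =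
    Top "('x, 'o) word" "('x, 'o) word"
  | Deep "('x, 'o) word" 'o "('x, 'o) word list" "('x, 'o) ctx" "('x, 'o) word list" "('x, 'o) word"

primrec fill :: "('x, 'o) ctx \<Rightarrow> ('x, 'o) word \<Rightarrow> ('x, 'o) word" where
  "fill (Top a b) v = a @ v @ b"
| "fill (Deep a d ws1 c ws2 b) v = a @ [App d (ws1 @ [fill c v] @ ws2)] @ b"

primrec valid :: "('o \<Rightarrow> nat) \<Rightarrow> ('x, 'o) ctx \<Rightarrow> bool" where
  "valid ar (Top a b) \<longleftrightarrow> list_all (wfp ar) a \<and> list_all (wfp ar) b"
| "valid ar (Deep a d ws1 c ws2 b) \<longleftrightarrow> list_all (wfp ar) a \<and> list_all (wfp ar) b \<and>
     length ws1 + 1 + length ws2 = ar d \<and> list_all (wfw ar) ws1 \<and> list_all (wfw ar) ws2 \<and>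
     valid ar c"

primrec toword :: "('x, 'o) ctx \<Rightarrow> ('x option, 'o) word" where
  "toword (Top a b) = emb a @ [Var None] @ emb b"
| "toword (Deep a d ws1 c ws2 b) = emb a @ [App d (map emb ws1 @ [toword c] @ map emb ws2)] @ emb b"

primrec frame :: "('x, 'o) word \<Rightarrow> ('x, 'o) word \<Rightarrow> ('x, 'o) ctx \<Rightarrow> ('x, 'o) ctx" where
  "frame a b (Top a' b') = Top (a @ a') (b' @ b)"
| "frame a b (Deep a' d ws1 c ws2 b') = Deep (a @ a') d ws1 c ws2 (b' @ b)"

primrec ctx_comp :: "('x, 'o) ctx \<Rightarrow> ('x, 'o) ctx \<Rightarrow> ('x, 'o) ctx" where
  "ctx_comp (Top a b) c' = frame a b c'"
| "ctx_comp (Deep a d ws1 c ws2 b) c' = Deep a d ws1 (ctx_comp c c') ws2 b"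

lemma fill_frame [simp]: "fill (frame a b c) v = a @ fill c v @ b"
  by (cases c) auto

lemma valid_frame [simp]:
  "valid ar (frame a b c) \<longleftrightarrow> list_all (wfp ar) a \<and> list_all (wfp ar) b \<and> valid ar c"
  by (cases c) auto

lemma toword_frame [simp]: "toword (frame a b c) = emb a @ toword c @ emb b"
  by (cases c) (auto simp: emb_def)

lemma fill_ctx_comp [simp]: "fill (ctx_comp c c') v = fill c (fill c' v)"
  by (induction c) auto

lemma valid_ctx_comp: "valid ar c \<Longrightarrow> valid ar c' \<Longrightarrow> valid ar (ctx_comp c c')"
  by (induction c) auto

lemma wfw_fill: "valid ar c \<Longrightarrow> wfw ar v \<Longrightarrow> wfw ar (fill c v)"
  by (induction c) (auto simp: wfw_iff wfp_App_iff)

lemma subst_Nil [simp]: "subst [] v = []"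
  and subst_Cons [simp]: "subst (p # u) v = substp p v @ subst u v"
  and subst_append [simp]: "subst (u @ u') v = subst u v @ subst u' v"
  by (simp_all add: subst_def)

lemma substp_emb [simp]: "substp (map_prm Some id p) v = [p]"
proof (induction p)
  case (App d ws)
  have "concat (map (\<lambda>q. substp q v) (map (map_prm Some id) w)) = w" if "w \<in> set ws" for w
  proof -
    have "map (\<lambda>q. substp q v) (map (map_prm Some id) w) = map (\<lambda>q. [q]) w"
      using App that by (auto simp: id_def)
    then show ?thesis by (simp only: concat_map_singleton map_ident)
  qed
  then show ?case by (auto simp: id_def intro!: map_idI)
qed simp

lemma subst_emb [simp]: "subst (emb a) v = a"
  by (induction a) (simp_all add: emb_def)

lemma subst_toword [simp]: "subst (toword c) v = fill c v"
proof (induction c)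
  case (Deep a d ws1 c ws2 b)
  have "concat (map (\<lambda>p. substp p v) (emb w)) = w" for w
    using subst_emb[of w v] by (simp add: subst_def)
  then show ?case using Deep by (auto simp: subst_def comp_def intro!: map_idI)
qed simp

lemma subst_toword_fill: "subst (toword c) = fill c"
  by (rule ext) simp

lemma emb_Nil [simp]: "emb [] = []"
  by (simp add: emb_def)

lemma star_count_emb [simp]: "star_count (map_prm Some id p) = 0"
  by (induction p) (auto simp: id_def)

lemma star_count_emb_word [simp]: "sum_list (map star_count (emb a)) = 0"
  by (induction a) (auto simp: emb_def)

lemma wfw_emb: "wfw ar a \<Longrightarrow> wfw ar (emb a)"
  unfolding emb_def by (rule wf_map_prm)

lemma list_all_wfp_emb: "list_all (wfp ar) a \<Longrightarrow> list_all (wfp ar) (emb a)"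
  by (auto simp: emb_def list.pred_map list_all_iff intro: wf_map_prm)

lemma star_word_toword: "valid ar c \<Longrightarrow> star_word ar (toword c)"
proof (induction c)
  case (Top a b)
  then show ?case
    by (auto simp: star_word_def wfw_iff list_all_wfp_emb wfp_wfw.intros(1))
next
  case (Deep a d ws1 c ws2 b)
  have "list_all (wfw ar) (map emb ws1)" "list_all (wfw ar) (map emb ws2)"
    using Deep.prems by (auto simp: list.pred_map list_all_iff wfw_emb)
  with Deep show ?case
    by (auto simp: star_word_def wfw_iff wfp_App_iff list_all_wfp_emb comp_def)
qed

text \<open>The converse: a star-free word is the embedding of an Omega-word, and a star word
  splits into star-free parts around its unique star.\<close>

lemma star_count_zero: "star_count p = 0 \<Longrightarrow> map_prm Some id (map_prm the id p) = p"
proof (induction p)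
  case (Var x)
  then show ?case by (cases x) auto
next
  case (App d ws)
  then show ?case by (auto simp: list.map_comp intro!: map_idI)
qed

lemma sum_list_eq_1_split:
  assumes "sum_list (map f xs) = (1::nat)"
  obtains a p b where "xs = a @ p # b" "f p = 1"
    "sum_list (map f a) = 0" "sum_list (map f b) = 0"
  using assms
proof (induction xs arbitrary: thesis)
  case Nil
  then show ?case by simp
next
  case (Cons x xs)
  show ?case
  proof (cases "f x = 0")
    case True
    with Cons.prems(2) have "sum_list (map f xs) = 1" by simp
    then obtain a p b where "xs = a @ p # b" "f p = 1"
      "sum_list (map f a) = 0" "sum_list (map f b) = 0"
      using Cons.IH by blast
    with True show ?thesis by (intro Cons.prems(1)[of "x # a" p b]) auto
  next
    case False
    have "f x + sum_list (map f xs) = 1" using Cons.prems(2) by simp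
    with False have "f x = 1" "sum_list (map f xs) = 0" by linarith+
    then show ?thesis by (intro Cons.prems(1)[of "[]"]) auto
  qed
qed

lemma emb_unemb: "sum_list (map star_count ps) = 0 \<Longrightarrow> emb (map (map_prm the id) ps) = ps"
  by (auto simp: emb_def star_count_zero intro!: map_idI)

lemma toword_decomp:
  fixes p :: "('x option, 'o) prm" and ps :: "('x option, 'o) word"
  shows "wfp ar p \<Longrightarrow> star_count p = 1 \<Longrightarrow> \<exists>c. valid ar c \<and> [p] = toword c"
    and "wfw ar ps \<Longrightarrow> sum_list (map star_count ps) = 1 \<Longrightarrow> \<exists>c. valid ar c \<and> ps = toword c"
proof (induction rule: wfp_wfw.inducts)
  case (wfp_Var x)
  then have "x = None" by (cases x) auto
  then show ?case by (intro exI[of _ "Top [] []"]) (simp add: emb_def)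
next
  case (wfp_App d ws)
  let ?sc = "\<lambda>w. sum_list (map star_count w)"
  have "sum_list (map ?sc ws) = 1" using wfp_App.prems by (simp add: comp_def)
  then obtain wa w wb where split: "ws = wa @ w # wb" "?sc w = 1"
    "sum_list (map ?sc wa) = 0" "sum_list (map ?sc wb) = 0"
    by (rule sum_list_eq_1_split)
  obtain c where c: "valid ar c" "w = toword c"
    using wfp_App.IH split(1,2) by auto
  let ?qa = "map (map (map_prm the id)) wa" and ?qb = "map (map (map_prm the id)) wb"
  have "map emb ?qa = wa" "map emb ?qb = wb"
    using split(3,4) by (auto simp: emb_unemb intro!: map_idI)
  moreover have "list_all (wfw ar) ?qa" "list_all (wfw ar) ?qb"
    using wfp_App.IH split(1) by (auto simp: list_all_iff intro: wf_map_prm)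
  moreover have "length ws = ar d" using wfp_App by blast
  ultimately show ?case
    using split(1) c by (intro exI[of _ "Deep [] d ?qa c ?qb []"]) simp
next
  case (wfw_word ps)
  from wfw_word.prems obtain pa p pb where split: "ps = pa @ p # pb" "star_count p = 1"
    "sum_list (map star_count pa) = 0" "sum_list (map star_count pb) = 0"
    by (rule sum_list_eq_1_split)
  obtain c where c: "valid ar c" "[p] = toword c"
    using wfw_word.IH split(1,2) by auto
  let ?qa = "map (map_prm the id) pa" and ?qb = "map (map_prm the id) pb"
  have "list_all (wfp ar) ?qa" "list_all (wfp ar) ?qb"
    using wfw_word.IH split(1) by (auto simp: list_all_iff intro: wf_map_prm)
  then show ?case
    using split c by (intro exI[of _ "frame ?qa ?qb c"]) (simp add: emb_unemb)
qed

lemma star_word_decomp: "star_word ar u \<Longrightarrow> \<exists>c. valid ar c \<and> u = toword c"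
  by (auto simp: star_word_def intro: toword_decomp(2))

lemma wfw_subst: "star_word ar u \<Longrightarrow> wfw ar v \<Longrightarrow> wfw ar (subst u v)"
  using star_word_decomp wfw_fill by fastforce

section \<open>Two occurrences in one word\<close>

lemma letter_positions:
  assumes "a1 @ p # b1 = a2 @ q # b2"
  obtains (same) "a1 = a2" "p = q" "b1 = b2"
  | (before) m where "a2 = a1 @ p # m" "b1 = m @ q # b2"
  | (after) m where "a1 = a2 @ q # m" "b2 = m @ p # b1"
proof -
  from assms have "(a1 = a2 \<and> p = q \<and> b1 = b2) \<or> (\<exists>m. a2 = a1 @ p # m \<and> b1 = m @ q # b2) \<or>
    (\<exists>m. a1 = a2 @ q # m \<and> b2 = m @ p # b1)"
  proof (induction a1 arbitrary: a2)
    case Nil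
    then show ?case by (cases a2) auto
  next
    case (Cons x a1)
    then show ?case by (cases a2) auto
  qed
  with that show ?thesis by blast
qed

lemma factor_positions:
  assumes e: "a1 @ v1 @ b1 = a2 @ v2 @ b2" and "v1 \<noteq> []" "v2 \<noteq> []"
    and le: "length a1 \<le> length a2"
  obtains (contains) m n where "v1 = m @ v2 @ n" "a2 = a1 @ m" "b2 = n @ b1"
  | (prefix) n where "v2 = v1 @ n" "a2 = a1" "b1 = n @ b2"
  | (disjoint) m where "a2 = a1 @ v1 @ m" "b1 = m @ v2 @ b2"
  | (overlap) a b where "a \<noteq> []" "b \<noteq> []" "v1 @ a = b @ v2" "length b < length v1"
      "a2 = a1 @ b" "b1 = a @ b2"
proof -
  define m0 where "m0 = drop (length a1) a2"
  have "a1 = take (length a1) a2"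
    using arg_cong[OF e, of "take (length a1)"] le by simp
  then have m0: "a2 = a1 @ m0" "v1 @ b1 = m0 @ v2 @ b2"
    using e unfolding m0_def
    by (metis append_take_drop_id, metis append_take_drop_id same_append_eq append.assoc)
  then obtain us where "v1 = m0 @ us \<and> us @ b1 = v2 @ b2 \<or> v1 @ us = m0 \<and> b1 = us @ v2 @ b2"
    by (auto simp: append_eq_append_conv2)
  then show ?thesis
  proof (elim disjE conjE)
    assume v1: "v1 = m0 @ us" and "us @ b1 = v2 @ b2"
    then obtain t where "us = v2 @ t \<and> t @ b1 = b2 \<or> us @ t = v2 \<and> b1 = t @ b2"
      by (auto simp: append_eq_append_conv2)
    then show ?thesis
    proof (elim disjE conjE)
      assume "us = v2 @ t" "t @ b1 = b2"
      with v1 m0 show ?thesis by (intro contains) auto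
    next
      assume v2: "us @ t = v2" and b1: "b1 = t @ b2"
      consider "us = []" | "t = []" | "m0 = []" | "us \<noteq> []" "t \<noteq> []" "m0 \<noteq> []"
        by blast
      then show ?thesis
      proof cases
        case 1
        with v1 v2 b1 m0 show ?thesis by (intro disjoint[of "[]"]) auto
      next
        case 2
        with v1 v2 b1 m0 show ?thesis by (intro contains[of m0 "[]"]) auto
      next
        case 3
        with v1 v2 b1 m0 show ?thesis by (intro prefix[of t]) auto
      next
        case 4
        with v1 v2 b1 m0 show ?thesis by (intro overlap[of t m0]) auto
      qed
    qed
  next
    assume "v1 @ us = m0" "b1 = us @ v2 @ b2"
    with m0 show ?thesis by (intro disjoint) auto
  qed
qed

lemma factor_letter_positions:
  assumes e: "a1 @ v1 @ b1 = a2 @ q # b2" and v1: "v1 \<noteq> []"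
  obtains (before) m where "a1 = a2 @ q # m" "b2 = m @ v1 @ b1"
  | (after) m where "a2 = a1 @ v1 @ m" "b1 = m @ q # b2"
  | (inside) m n where "v1 = m @ q # n" "a2 = a1 @ m" "b2 = n @ b1"
proof (cases "length a1 \<le> length a2")
  case True
  have e': "a1 @ v1 @ b1 = a2 @ [q] @ b2" and q: "[q] \<noteq> []" using e by simp_all
  from e' v1 q True show ?thesis
  proof (cases rule: factor_positions)
    case (prefix n)
    with v1 have "v1 = [] @ q # []" by (cases v1) auto
    with prefix show ?thesis by (intro inside) auto
  next
    case (overlap a b)
    then have "length (v1 @ a) = length (b @ [q])" by metis
    moreover have "length a > 0" using overlap(1) by simp
    ultimately show ?thesis using overlap(4) by simp
  qed (auto intro: after inside)
next
  case False
  have e': "a2 @ [q] @ b2 = a1 @ v1 @ b1" and q: "[q] \<noteq> []"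
    and le: "length a2 \<le> length a1" using e False by simp_all
  from e' q v1 le show ?thesis
  proof (cases rule: factor_positions)
    case (contains m n)
    with v1 have "m = []" by (cases m) auto
    with contains False show ?thesis by simp
  qed (use False in \<open>auto intro: before\<close>)
qed

text \<open>The possible relative positions of two occurrences F1 = fill c1 of v1 and F2 = fill c2
  of v2 in one word: v1 contains v2 (inclusion), the occurrences are disjoint (H1 y is the
  context of the first hole when y fills the second one and H2 x the other way round), or
  v1 ends with a proper nonempty prefix of v2 at top level of the same subword
  (intersection).\<close>

definition ordered_overlap :: "('o \<Rightarrow> nat) \<Rightarrow> ('x, 'o) word \<Rightarrow> ('x, 'o) word \<Rightarrow>
    (('x, 'o) word \<Rightarrow> ('x, 'o) word) \<Rightarrow> (('x, 'o) word \<Rightarrow> ('x, 'o) word) \<Rightarrow> bool" where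
  "ordered_overlap ar v1 v2 F1 F2 \<longleftrightarrow>
     (\<exists>c. valid ar c \<and> v1 = fill c v2 \<and> F2 = F1 \<circ> fill c) \<or>
     (\<exists>H1 H2. (\<forall>y. wfw ar y \<longrightarrow> valid ar (H1 y)) \<and> (\<forall>x. wfw ar x \<longrightarrow> valid ar (H2 x)) \<and>
        (\<forall>x y. wfw ar x \<longrightarrow> wfw ar y \<longrightarrow> fill (H1 y) x = fill (H2 x) y) \<and>
        F1 = fill (H1 v2) \<and> F2 = fill (H2 v1)) \<or>
     (\<exists>c a b. valid ar c \<and> wfw ar a \<and> wfw ar b \<and> v1 @ a = b @ v2 \<and>
        length (v1 @ a) < length v1 + length v2 \<and>
        F1 = (\<lambda>x. fill c (x @ a)) \<and> F2 = (\<lambda>x. fill c (b @ x)))"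

definition overlap :: "('o \<Rightarrow> nat) \<Rightarrow> ('x, 'o) word \<Rightarrow> ('x, 'o) word \<Rightarrow>
    (('x, 'o) word \<Rightarrow> ('x, 'o) word) \<Rightarrow> (('x, 'o) word \<Rightarrow> ('x, 'o) word) \<Rightarrow> bool" where
  "overlap ar v1 v2 F1 F2 \<longleftrightarrow> ordered_overlap ar v1 v2 F1 F2 \<or> ordered_overlap ar v2 v1 F2 F1"

lemma overlap_sym: "overlap ar v1 v2 F1 F2 \<Longrightarrow> overlap ar v2 v1 F2 F1"
  unfolding overlap_def by blast

lemma ordered_overlap_inclusion:
  "valid ar c \<Longrightarrow> v1 = fill c v2 \<Longrightarrow> F2 = F1 \<circ> fill c \<Longrightarrow> ordered_overlap ar v1 v2 F1 F2"
  unfolding ordered_overlap_def by blast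

lemma ordered_overlap_lift:
  assumes "ordered_overlap ar v1 v2 F1 F2"
    and L: "\<And>c. valid ar c \<Longrightarrow> valid ar (L c)" and G: "\<And>c. fill (L c) = G \<circ> fill c"
  shows "ordered_overlap ar v1 v2 (G \<circ> F1) (G \<circ> F2)"
  using assms(1)[unfolded ordered_overlap_def]
proof (elim disjE exE conjE)
  fix c assume "valid ar c" "v1 = fill c v2" "F2 = F1 \<circ> fill c"
  then show ?thesis by (intro ordered_overlap_inclusion[of ar c]) auto
next
  fix H1 H2
  assume "\<forall>y. wfw ar y \<longrightarrow> valid ar (H1 y)" "\<forall>x. wfw ar x \<longrightarrow> valid ar (H2 x)"
    "\<forall>x y. wfw ar x \<longrightarrow> wfw ar y \<longrightarrow> fill (H1 y) x = fill (H2 x) y"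
    "F1 = fill (H1 v2)" "F2 = fill (H2 v1)"
  then show ?thesis unfolding ordered_overlap_def
    by (intro disjI2 disjI1 exI[of _ "L \<circ> H1"] exI[of _ "L \<circ> H2"]) (auto simp: L G)
next
  fix c a b
  assume "valid ar c" "wfw ar a" "wfw ar b" "v1 @ a = b @ v2"
    "length (v1 @ a) < length v1 + length v2"
    "F1 = (\<lambda>x. fill c (x @ a))" "F2 = (\<lambda>x. fill c (b @ x))"
  then show ?thesis unfolding ordered_overlap_def
    by (intro disjI2 disjI2 exI[of _ "L c"] exI[of _ a] exI[of _ b]) (auto simp: L G)
qed

lemma overlap_lift:
  assumes "overlap ar v1 v2 F1 F2"
    and "\<And>c. valid ar c \<Longrightarrow> valid ar (L c)" and "\<And>c. fill (L c) = G \<circ> fill c"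
  shows "overlap ar v1 v2 (G \<circ> F1) (G \<circ> F2)"
  using assms ordered_overlap_lift[of ar _ _ _ _ L G] unfolding overlap_def by blast

lemma list_all_wfp_fill: "valid ar c \<Longrightarrow> wfw ar x \<Longrightarrow> list_all (wfp ar) (fill c x)"
  using wfw_fill[of ar c x] by (simp add: wfw_iff)

lemma ordered_overlap_apart:
  assumes "valid ar k1" "valid ar k2"
    and "list_all (wfp ar) a" "list_all (wfp ar) m" "list_all (wfp ar) b"
    and "F1 = (\<lambda>x. a @ fill k1 x @ m @ fill k2 v2 @ b)"
    and "F2 = (\<lambda>y. a @ fill k1 v1 @ m @ fill k2 y @ b)"
  shows "ordered_overlap ar v1 v2 F1 F2"
  unfolding ordered_overlap_def
  using assms
  by (intro disjI2 disjI1 exI[of _ "\<lambda>y. frame a (m @ fill k2 y @ b) k1"]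
      exI[of _ "\<lambda>x. frame (a @ fill k1 x @ m) b k2"]) (auto simp: list_all_wfp_fill)

lemma ordered_overlap_apart_args:
  assumes "valid ar k1" "valid ar k2" "list_all (wfp ar) a" "list_all (wfp ar) b"
    and "list_all (wfw ar) ws1" "list_all (wfw ar) m" "list_all (wfw ar) ws2"
    and "length ws1 + length m + length ws2 + 2 = ar d"
    and "F1 = (\<lambda>x. a @ [App d (ws1 @ [fill k1 x] @ m @ [fill k2 v2] @ ws2)] @ b)"
    and "F2 = (\<lambda>y. a @ [App d (ws1 @ [fill k1 v1] @ m @ [fill k2 y] @ ws2)] @ b)"
  shows "ordered_overlap ar v1 v2 F1 F2"
  unfolding ordered_overlap_def
  using assms
  by (intro disjI2 disjI1 exI[of _ "\<lambda>y. Deep a d ws1 k1 (m @ [fill k2 y] @ ws2) b"]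
      exI[of _ "\<lambda>x. Deep a d (ws1 @ [fill k1 x] @ m) k2 ws2 b"]) (auto simp: wfw_fill)

lemma overlap_Top_Top_le:
  assumes v: "valid ar (Top a1 b1)" "valid ar (Top a2 b2)" and w: "wfw ar v1" "wfw ar v2"
    and e: "a1 @ v1 @ b1 = a2 @ v2 @ b2" and le: "length a1 \<le> length a2"
  shows "overlap ar v1 v2 (fill (Top a1 b1)) (fill (Top a2 b2))"
proof -
  have n: "v1 \<noteq> []" "v2 \<noteq> []" and la: "list_all (wfp ar) v1" "list_all (wfp ar) v2"
    using w by (auto simp: wfw_iff)
  from e n le show ?thesis
  proof (cases rule: factor_positions)
    case (contains m n)
    then have "ordered_overlap ar v1 v2 (fill (Top a1 b1)) (fill (Top a2 b2))"
      using la by (intro ordered_overlap_inclusion[of ar "Top m n"]) auto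
    then show ?thesis by (simp add: overlap_def)
  next
    case (prefix n)
    then have "ordered_overlap ar v2 v1 (fill (Top a2 b2)) (fill (Top a1 b1))"
      using la by (intro ordered_overlap_inclusion[of ar "Top [] n"]) auto
    then show ?thesis by (simp add: overlap_def)
  next
    case (disjoint m)
    then have "ordered_overlap ar v1 v2 (fill (Top a1 b1)) (fill (Top a2 b2))"
      using v la by (intro ordered_overlap_apart[of ar "Top [] []" "Top [] []" a1 m b2]) auto
    then show ?thesis by (simp add: overlap_def)
  next
    case (overlap a b)
    have "length (v1 @ a) = length (b @ v2)" using overlap(3) by metis
    then have "length (v1 @ a) < length v1 + length v2" using overlap(4) by simp
    with overlap v have "ordered_overlap ar v1 v2 (fill (Top a1 b1)) (fill (Top a2 b2))"
      unfolding ordered_overlap_def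
      by (intro disjI2 exI[of _ "Top a1 b2"] exI[of _ a] exI[of _ b]) (auto simp: wfw_iff)
    then show ?thesis by (simp add: overlap_def)
  qed
qed

lemma overlap_Top_Top:
  assumes "valid ar (Top a1 b1)" "valid ar (Top a2 b2)" "wfw ar v1" "wfw ar v2"
    and "fill (Top a1 b1) v1 = fill (Top a2 b2) v2"
  shows "overlap ar v1 v2 (fill (Top a1 b1)) (fill (Top a2 b2))"
proof (cases "length a1 \<le> length a2")
  case True
  with assms show ?thesis by (intro overlap_Top_Top_le) auto
next
  case False
  with assms have "overlap ar v2 v1 (fill (Top a2 b2)) (fill (Top a1 b1))"
    by (intro overlap_Top_Top_le) auto
  then show ?thesis by (rule overlap_sym)
qed

lemma overlap_Top_Deep:
  assumes v: "valid ar (Top a1 b1)" "valid ar (Deep a2 d ws1 c ws2 b2)" and w: "wfw ar v1"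
    and e: "fill (Top a1 b1) v1 = fill (Deep a2 d ws1 c ws2 b2) v2"
  shows "overlap ar v1 v2 (fill (Top a1 b1)) (fill (Deep a2 d ws1 c ws2 b2))"
proof -
  let ?q = "App d (ws1 @ [fill c v2] @ ws2)" and ?K = "Deep [] d ws1 c ws2 []"
  have n: "v1 \<noteq> []" and la: "list_all (wfp ar) v1" using w by (auto simp: wfw_iff)
  from e have "a1 @ v1 @ b1 = a2 @ ?q # b2" by simp
  from this n show ?thesis
  proof (cases rule: factor_letter_positions)
    case (before m)
    then have "ordered_overlap ar v2 v1 (fill (Deep a2 d ws1 c ws2 b2)) (fill (Top a1 b1))"
      using v by (intro ordered_overlap_apart[of ar ?K "Top [] []" a2 m b1]) auto
    then show ?thesis by (simp add: overlap_def)
  next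
    case (after m)
    then have "ordered_overlap ar v1 v2 (fill (Top a1 b1)) (fill (Deep a2 d ws1 c ws2 b2))"
      using v by (intro ordered_overlap_apart[of ar "Top [] []" ?K a1 m b2]) auto
    then show ?thesis by (simp add: overlap_def)
  next
    case (inside m n)
    then have "ordered_overlap ar v1 v2 (fill (Top a1 b1)) (fill (Deep a2 d ws1 c ws2 b2))"
      using la v by (intro ordered_overlap_inclusion[of ar "Deep m d ws1 c ws2 n"]) auto
    then show ?thesis by (simp add: overlap_def)
  qed
qed

text \<open>Both occurrences inside prime words; if they lie in the same argument of the same
  prime word the classification of the inner contexts is lifted.\<close>

lemma overlap_Deep_Deep:
  assumes v: "valid ar (Deep a1 d1 ws1 c1 ws2 b1)" "valid ar (Deep a2 d2 ws1' c2 ws2' b2)"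
    and e: "fill (Deep a1 d1 ws1 c1 ws2 b1) v1 = fill (Deep a2 d2 ws1' c2 ws2' b2) v2"
    and IH: "fill c1 v1 = fill c2 v2 \<Longrightarrow> overlap ar v1 v2 (fill c1) (fill c2)"
  shows "overlap ar v1 v2 (fill (Deep a1 d1 ws1 c1 ws2 b1)) (fill (Deep a2 d2 ws1' c2 ws2' b2))"
proof -
  let ?p = "App d1 (ws1 @ [fill c1 v1] @ ws2)" and ?q = "App d2 (ws1' @ [fill c2 v2] @ ws2')"
  let ?K1 = "Deep [] d1 ws1 c1 ws2 []" and ?K2 = "Deep [] d2 ws1' c2 ws2' []"
  from e have "a1 @ ?p # b1 = a2 @ ?q # b2" by simp
  then show ?thesis
  proof (cases rule: letter_positions)
    case same
    then have ab: "a1 = a2" "b1 = b2" and d: "d1 = d2"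
      and args: "ws1 @ fill c1 v1 # ws2 = ws1' @ fill c2 v2 # ws2'" by auto
    from args show ?thesis
    proof (cases rule: letter_positions)
      case same
      let ?G = "\<lambda>y. a1 @ [App d1 (ws1 @ [y] @ ws2)] @ b1"
      have "overlap ar v1 v2 (?G \<circ> fill c1) (?G \<circ> fill c2)"
        using IH same v by (intro overlap_lift[where L = "\<lambda>c. Deep a1 d1 ws1 c ws2 b1"]) auto
      moreover have "?G \<circ> fill c1 = fill (Deep a1 d1 ws1 c1 ws2 b1)"
        and "?G \<circ> fill c2 = fill (Deep a2 d2 ws1' c2 ws2' b2)"
        using same ab d by auto
      ultimately show ?thesis by simp
    next
      case (before m)
      then have "ordered_overlap ar v1 v2 (fill (Deep a1 d1 ws1 c1 ws2 b1)) (fill (Deep a2 d2 ws1' c2 ws2' b2))"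
        using v ab d by (intro ordered_overlap_apart_args[of ar c1 c2 a1 b1 ws1 m ws2' d1]) auto
      then show ?thesis by (simp add: overlap_def)
    next
      case (after m)
      then have "ordered_overlap ar v2 v1 (fill (Deep a2 d2 ws1' c2 ws2' b2)) (fill (Deep a1 d1 ws1 c1 ws2 b1))"
        using v ab d by (intro ordered_overlap_apart_args[of ar c2 c1 a1 b1 ws1' m ws2 d1]) auto
      then show ?thesis by (simp add: overlap_def)
    qed
  next
    case (before m)
    then have "ordered_overlap ar v1 v2 (fill (Deep a1 d1 ws1 c1 ws2 b1)) (fill (Deep a2 d2 ws1' c2 ws2' b2))"
      using v by (intro ordered_overlap_apart[of ar ?K1 ?K2 a1 m b2]) auto
    then show ?thesis by (simp add: overlap_def)
  next
    case (after m)
    then have "ordered_overlap ar v2 v1 (fill (Deep a2 d2 ws1' c2 ws2' b2)) (fill (Deep a1 d1 ws1 c1 ws2 b1))"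
      using v by (intro ordered_overlap_apart[of ar ?K2 ?K1 a2 m b1]) auto
    then show ?thesis by (simp add: overlap_def)
  qed
qed

theorem overlap_of_occurrences:
  "valid ar c1 \<Longrightarrow> valid ar c2 \<Longrightarrow> wfw ar v1 \<Longrightarrow> wfw ar v2 \<Longrightarrow> fill c1 v1 = fill c2 v2 \<Longrightarrow>
   overlap ar v1 v2 (fill c1) (fill c2)"
proof (induction c1 arbitrary: c2)
  case (Top a1 b1)
  then show ?case
  proof (cases c2)
    case Top
    with Top.prems show ?thesis by (simp only: overlap_Top_Top)
  next
    case Deep
    with Top.prems show ?thesis by (simp only: overlap_Top_Deep)
  qed
next
  case (Deep a1 d1 ws1 c1 ws2 b1)
  then show ?case
  proof (cases c2)
    case Top
    with Deep.prems show ?thesis by (metis overlap_Top_Deep overlap_sym)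
  next
    case Deep
    with Deep.prems Deep.IH show ?thesis by (simp only: overlap_Deep_Deep valid.simps)
  qed
qed

section \<open>Linear maps induced by maps on Omega-words\<close>

definition lin_ext :: "('a \<Rightarrow> 'b) \<Rightarrow> ('a \<Rightarrow>\<^sub>0 'k::comm_ring_1) \<Rightarrow> ('b \<Rightarrow>\<^sub>0 'k)" where
  "lin_ext f p = (\<Sum>v\<in>Poly_Mapping.keys p. Poly_Mapping.single (f v) (Poly_Mapping.lookup p v))"

lemma subst_poly_lin_ext: "subst_poly u s = lin_ext (subst u) s"
  by (simp add: subst_poly_def lin_ext_def)

lemma lin_ext_superset:
  assumes "finite A" "Poly_Mapping.keys p \<subseteq> A"
  shows "lin_ext f p = (\<Sum>v\<in>A. Poly_Mapping.single (f v) (Poly_Mapping.lookup p v))"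
  unfolding lin_ext_def
  by (rule sum.mono_neutral_left) (use assms in \<open>auto simp: in_keys_iff\<close>)

lemma lin_ext_add: "lin_ext f (p + q) = lin_ext f p + lin_ext f q"
proof -
  let ?A = "Poly_Mapping.keys p \<union> Poly_Mapping.keys q"
  have "lin_ext f (p + q) = (\<Sum>v\<in>?A. Poly_Mapping.single (f v) (Poly_Mapping.lookup (p + q) v))"
    by (rule lin_ext_superset) (auto simp: keys_add)
  also have "\<dots> = (\<Sum>v\<in>?A. Poly_Mapping.single (f v) (Poly_Mapping.lookup p v)) +
      (\<Sum>v\<in>?A. Poly_Mapping.single (f v) (Poly_Mapping.lookup q v))"
    by (simp add: lookup_add single_add sum.distrib)
  also have "\<dots> = lin_ext f p + lin_ext f q"
    by (subst (1 2) lin_ext_superset[of ?A]) auto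
  finally show ?thesis .
qed

lemma lin_ext_zero [simp]: "lin_ext f 0 = 0"
  by (simp add: lin_ext_def)

lemma lin_ext_single [simp]: "lin_ext f (Poly_Mapping.single v c) = Poly_Mapping.single (f v) c"
  by (subst lin_ext_superset[of "{v}"]) auto

lemma lin_ext_diff: "lin_ext f (p - q) = lin_ext f p - lin_ext f q"
  using lin_ext_add[of f "p - q" q] by (simp add: eq_diff_eq)

lemma lin_ext_sum_list: "lin_ext f (sum_list xs) = sum_list (map (lin_ext f) xs)"
  by (induction xs) (auto simp: lin_ext_add)

lemma lin_ext_sum: "lin_ext f (sum h A) = (\<Sum>i\<in>A. lin_ext f (h i))"
  by (induction A rule: infinite_finite_induct) (auto simp: lin_ext_add)

lemma lin_ext_lin_ext: "lin_ext f (lin_ext g p) = lin_ext (f \<circ> g) p"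
  by (simp add: lin_ext_def[of g] lin_ext_sum lin_ext_def[of "f \<circ> g"])

lemma lookup_smult_op: "Poly_Mapping.lookup (smult_op a f) k = a * Poly_Mapping.lookup f k"
  unfolding smult_op_def by transfer (simp add: when_def)

lemma smult_op_add: "smult_op a (p + q) = smult_op a p + smult_op a q"
  by (rule poly_mapping_eqI) (simp add: lookup_smult_op lookup_add algebra_simps)

lemma smult_op_zero [simp]: "smult_op a 0 = 0"
  by (rule poly_mapping_eqI) (simp add: lookup_smult_op)

lemma smult_op_sum: "smult_op a (sum g A) = (\<Sum>i\<in>A. smult_op a (g i))"
  by (induction A rule: infinite_finite_induct) (auto simp: smult_op_add)

lemma smult_op_single: "smult_op a (Poly_Mapping.single v c) = Poly_Mapping.single v (a * c)"
  by (rule poly_mapping_eqI) (simp add: lookup_smult_op lookup_single when_def)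

lemma smult_op_smult_op: "smult_op a (smult_op b p) = smult_op (a * b) p"
  by (rule poly_mapping_eqI) (simp add: lookup_smult_op algebra_simps)

lemma smult_op_one [simp]: "smult_op 1 p = p"
  by (rule poly_mapping_eqI) (simp add: lookup_smult_op)

lemma smult_op_minus_one: "smult_op (- 1) p = - p"
  by (rule poly_mapping_eqI) (simp add: lookup_smult_op)

lemma lin_ext_smult_op: "lin_ext f (smult_op a p) = smult_op a (lin_ext f p)"
proof -
  have "Poly_Mapping.keys (smult_op a p) \<subseteq> Poly_Mapping.keys p"
    by (auto simp: in_keys_iff lookup_smult_op)
  then have "lin_ext f (smult_op a p) =
      (\<Sum>v\<in>Poly_Mapping.keys p. Poly_Mapping.single (f v) (Poly_Mapping.lookup (smult_op a p) v))"
    by (intro lin_ext_superset) auto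
  also have "\<dots> = smult_op a (lin_ext f p)"
    by (simp add: lin_ext_def smult_op_sum smult_op_single lookup_smult_op)
  finally show ?thesis .
qed

lemma monomial_orderD:
  assumes "monomial_order ar lt"
  shows "wfw ar v \<Longrightarrow> \<not> lt v v"
    and "wfw ar x \<Longrightarrow> wfw ar v \<Longrightarrow> wfw ar w \<Longrightarrow> lt x v \<Longrightarrow> lt v w \<Longrightarrow> lt x w"
    and "wfw ar v \<Longrightarrow> wfw ar w \<Longrightarrow> lt v w \<or> v = w \<or> lt w v"
    and "star_word ar u \<Longrightarrow> wfw ar v \<Longrightarrow> wfw ar w \<Longrightarrow> lt v w \<Longrightarrow> lt (subst u v) (subst u w)"
  using assms unfolding monomial_order_def by blast+

lemma greatest_word_exists:
  assumes mo: "monomial_order ar lt" and "finite K" "K \<noteq> {}" "\<forall>v\<in>K. wfw ar v"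
  shows "\<exists>w\<in>K. \<forall>v\<in>K. v \<noteq> w \<longrightarrow> lt v w"
  using assms(2-4)
proof (induction K rule: finite_ne_induct)
  case (singleton x)
  then show ?case by simp
next
  case (insert x F)
  then obtain w where w: "w \<in> F" "\<forall>v\<in>F. v \<noteq> w \<longrightarrow> lt v w" by auto
  have wf: "wfw ar x" "wfw ar w" "\<forall>v\<in>F. wfw ar v" using insert.prems w(1) by auto
  consider "lt w x" | "w = x" | "lt x w" using monomial_orderD(3)[OF mo wf(1,2)] by blast
  then show ?case
  proof cases
    case 1
    then have "\<forall>v\<in>insert x F. v \<noteq> x \<longrightarrow> lt v x"
      using w wf monomial_orderD(2)[OF mo] by (metis insert_iff)
    then show ?thesis by blast
  next
    case 2
    with insert.hyps w(1) show ?thesis by simp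
  next
    case 3
    with w show ?thesis by blast
  qed
qed

lemma lead_greatest:
  assumes mo: "monomial_order ar lt" and "is_opoly ar s" "s \<noteq> 0"
  shows "lead lt s \<in> Poly_Mapping.keys s"
    and "\<And>v. v \<in> Poly_Mapping.keys s \<Longrightarrow> v \<noteq> lead lt s \<Longrightarrow> lt v (lead lt s)"
proof -
  let ?P = "\<lambda>w. w \<in> Poly_Mapping.keys s \<and> (\<forall>v\<in>Poly_Mapping.keys s. v \<noteq> w \<longrightarrow> lt v w)"
  have wf: "\<forall>v\<in>Poly_Mapping.keys s. wfw ar v" using assms(2) by (simp add: is_opoly_def)
  obtain w where w: "?P w"
    using greatest_word_exists[OF mo finite_keys _ wf] assms(3) by auto
  have "w' = w" if "?P w'" for w'
  proof (rule ccontr)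
    assume "w' \<noteq> w"
    then have "lt w' w" "lt w w'" using that w by auto
    then show False using monomial_orderD(1,2)[OF mo] wf w that by blast
  qed
  with w have "?P (lead lt s)" unfolding lead_def by (rule theI)
  then show "lead lt s \<in> Poly_Mapping.keys s"
    and "\<And>v. v \<in> Poly_Mapping.keys s \<Longrightarrow> v \<noteq> lead lt s \<Longrightarrow> lt v (lead lt s)" by auto
qed

section \<open>Combinations below a word\<close>

definition comb_below :: "('o \<Rightarrow> nat) \<Rightarrow> (('x, 'o) word \<Rightarrow> ('x, 'o) word \<Rightarrow> bool) \<Rightarrow>
    ('x, 'o, 'k::comm_ring_1) opoly set \<Rightarrow> ('x, 'o) word \<Rightarrow> ('x, 'o, 'k) opoly \<Rightarrow> bool" where
  "comb_below ar lt S W p \<longleftrightarrow>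
     (\<exists>ts. p = (\<Sum>(a, u, s)\<leftarrow>ts. smult_op a (subst_poly u s)) \<and>
           (\<forall>(a, u, s)\<in>set ts. star_word ar u \<and> s \<in> S \<and> lt (subst u (lead lt s)) W))"

lemma cong_mod_iff_comb_below: "cong_mod ar lt S w p q \<longleftrightarrow> comb_below ar lt S w (p - q)"
  unfolding cong_mod_def comb_below_def by simp

lemma comb_below_zero: "comb_below ar lt S W 0"
  unfolding comb_below_def by (rule exI[of _ "[]"]) simp

lemma comb_below_term:
  "star_word ar u \<Longrightarrow> s \<in> S \<Longrightarrow> lt (subst u (lead lt s)) W \<Longrightarrow>
   comb_below ar lt S W (smult_op a (subst_poly u s))"
  unfolding comb_below_def by (rule exI[of _ "[(a, u, s)]"]) simp

lemma comb_below_add: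
  assumes "comb_below ar lt S W p" "comb_below ar lt S W q"
  shows "comb_below ar lt S W (p + q)"
proof -
  obtain ts1 where "p = (\<Sum>(a, u, s)\<leftarrow>ts1. smult_op a (subst_poly u s))"
    "\<forall>(a, u, s)\<in>set ts1. star_word ar u \<and> s \<in> S \<and> lt (subst u (lead lt s)) W"
    using assms(1) unfolding comb_below_def by blast
  moreover obtain ts2 where "q = (\<Sum>(a, u, s)\<leftarrow>ts2. smult_op a (subst_poly u s))"
    "\<forall>(a, u, s)\<in>set ts2. star_word ar u \<and> s \<in> S \<and> lt (subst u (lead lt s)) W"
    using assms(2) unfolding comb_below_def by blast
  ultimately show ?thesis unfolding comb_below_def by (intro exI[of _ "ts1 @ ts2"]) auto
qed

lemma comb_below_smult:
  assumes "comb_below ar lt S W p"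
  shows "comb_below ar lt S W (smult_op c p)"
proof -
  obtain ts where ts: "p = (\<Sum>(a, u, s)\<leftarrow>ts. smult_op a (subst_poly u s))"
    "\<forall>(a, u, s)\<in>set ts. star_word ar u \<and> s \<in> S \<and> lt (subst u (lead lt s)) W"
    using assms unfolding comb_below_def by auto
  let ?ts = "map (\<lambda>(a, u, s). (c * a, u, s)) ts"
  have "smult_op c p = (\<Sum>(a, u, s)\<leftarrow>?ts. smult_op a (subst_poly u s))"
    unfolding ts(1) by (induction ts) (auto simp: smult_op_add smult_op_smult_op)
  with ts(2) show ?thesis unfolding comb_below_def by (intro exI[of _ ?ts]) auto
qed

lemma comb_below_diff:
  assumes "comb_below ar lt S W p" "comb_below ar lt S W q"
  shows "comb_below ar lt S W (p - q)"
  using comb_below_add[OF assms(1) comb_below_smult[OF assms(2), of "- 1"]]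
  by (simp add: smult_op_minus_one)

lemma comb_below_sum:
  "(\<And>i. i \<in> A \<Longrightarrow> comb_below ar lt S W (g i)) \<Longrightarrow> comb_below ar lt S W (sum g A)"
  by (induction A rule: infinite_finite_induct) (auto simp: comb_below_zero comb_below_add)

text \<open>Putting a combination below W into a context c yields a combination below c|_W;
  this is where compatibility of the monomial ordering with contexts enters.\<close>

lemma comb_below_fill:
  assumes mo: "monomial_order ar lt" and S: "\<forall>s\<in>S. wfw ar (lead lt s)"
    and c: "valid ar c" and W: "wfw ar W" and p: "comb_below ar lt S W p"
  shows "comb_below ar lt S (fill c W) (lin_ext (fill c) p)"
proof -
  obtain ts where ts: "p = (\<Sum>(a, u, s)\<leftarrow>ts. smult_op a (subst_poly u s))"
    "\<forall>(a, u, s)\<in>set ts. star_word ar u \<and> s \<in> S \<and> lt (subst u (lead lt s)) W"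
    using p unfolding comb_below_def by blast
  have "comb_below ar lt S (fill c W) (lin_ext (fill c) (smult_op a (subst_poly u s)))"
    if u: "star_word ar u" and s: "s \<in> S" and less: "lt (subst u (lead lt s)) W" for a u s
  proof -
    obtain cu where cu: "valid ar cu" "u = toword cu" using star_word_decomp[OF u] by blast
    have "fill c \<circ> subst u = subst (toword (ctx_comp c cu))" using cu by auto
    then have "lin_ext (fill c) (smult_op a (subst_poly u s)) =
        smult_op a (subst_poly (toword (ctx_comp c cu)) s)"
      by (simp add: lin_ext_smult_op subst_poly_lin_ext lin_ext_lin_ext)
    moreover have "lt (fill c (subst u (lead lt s))) (fill c W)"
      using monomial_orderD(4)[OF mo star_word_toword[OF c] wfw_subst[OF u] W less] S s
      by simp
    ultimately show ?thesis
      using c cu s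
      by (auto intro!: comb_below_term star_word_toword valid_ctx_comp)
  qed
  with ts(2) show ?thesis unfolding ts(1)
    by (induction ts) (auto simp: lin_ext_sum_list lin_ext_add comb_below_zero intro!: comb_below_add)
qed

lemma GSB_lead:
  assumes mo: "monomial_order ar lt" and G: "GSB ar lt S" and s: "s \<in> S"
  shows "wfw ar (lead lt s)" and "Poly_Mapping.lookup s (lead lt s) = 1"
    and "lead lt s \<in> Poly_Mapping.keys s" and "\<forall>v\<in>Poly_Mapping.keys s. wfw ar v"
    and "\<And>v. v \<in> Poly_Mapping.keys s \<Longrightarrow> v \<noteq> lead lt s \<Longrightarrow> lt v (lead lt s)"
proof -
  have s': "is_opoly ar s" "monic lt s" using G s unfolding GSB_def by auto
  then show "\<forall>v\<in>Poly_Mapping.keys s. wfw ar v" "Poly_Mapping.lookup s (lead lt s) = 1"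
    by (simp_all add: is_opoly_def monic_def)
  from s' have "s \<noteq> 0" by (simp add: monic_def)
  with mo s'(1) show lead: "lead lt s \<in> Poly_Mapping.keys s"
    and "\<And>v. v \<in> Poly_Mapping.keys s \<Longrightarrow> v \<noteq> lead lt s \<Longrightarrow> lt v (lead lt s)"
    by (auto intro: lead_greatest)
  with s'(1) show "wfw ar (lead lt s)" by (simp add: is_opoly_def)
qed

lemma GSB_inclusion:
  "GSB ar lt S \<Longrightarrow> f \<in> S \<Longrightarrow> g \<in> S \<Longrightarrow> star_word ar u \<Longrightarrow> lead lt f = subst u (lead lt g) \<Longrightarrow>
   cong_mod ar lt S (lead lt f) (f - subst_poly u g) 0"
  unfolding GSB_def by blast

lemma GSB_intersection:
  "GSB ar lt S \<Longrightarrow> f \<in> S \<Longrightarrow> g \<in> S \<Longrightarrow> wfw ar a \<Longrightarrow> wfw ar b \<Longrightarrow>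
   lead lt f @ a = b @ lead lt g \<Longrightarrow> length (lead lt f @ a) < length (lead lt f) + length (lead lt g) \<Longrightarrow>
   cong_mod ar lt S (lead lt f @ a)
     (subst_poly (Var None # emb a) f - subst_poly (emb b @ [Var None]) g) 0"
  unfolding GSB_def by blast

text \<open>Inclusion: lead s1 = c|_{lead s2}; this is an including composition, placed into c1.\<close>

lemma inclusion_case:
  assumes mo: "monomial_order ar lt" and G: "GSB ar lt S" and s: "s1 \<in> S" "s2 \<in> S"
    and c1: "valid ar c1" and c: "valid ar c" and e: "lead lt s1 = fill c (lead lt s2)"
  shows "comb_below ar lt S (fill c1 (lead lt s1))
    (lin_ext (fill c1) s1 - lin_ext (fill c1 \<circ> fill c) s2)"
proof -
  have "cong_mod ar lt S (lead lt s1) (s1 - subst_poly (toword c) s2) 0"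
    using GSB_inclusion[OF G s star_word_toword[OF c]] e by simp
  then have "comb_below ar lt S (lead lt s1) (s1 - lin_ext (fill c) s2)"
    by (simp add: cong_mod_iff_comb_below subst_poly_lin_ext subst_toword_fill)
  from comb_below_fill[OF mo _ c1 _ this] show ?thesis
    using GSB_lead[OF mo G] s by (simp add: lin_ext_diff lin_ext_lin_ext)
qed

text \<open>Intersection: lead s1 a = b lead s2 inside a context c; this is an intersection
  composition, placed into c.\<close>

lemma intersection_case:
  assumes mo: "monomial_order ar lt" and G: "GSB ar lt S" and s: "s1 \<in> S" "s2 \<in> S"
    and c: "valid ar c" and ab: "wfw ar a" "wfw ar b" and e: "lead lt s1 @ a = b @ lead lt s2"
    and l: "length (lead lt s1 @ a) < length (lead lt s1) + length (lead lt s2)"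
  shows "comb_below ar lt S (fill c (lead lt s1 @ a))
    (lin_ext (\<lambda>x. fill c (x @ a)) s1 - lin_ext (\<lambda>x. fill c (b @ x)) s2)"
proof -
  have "subst (Var None # emb a) = (\<lambda>x. x @ a)" and "subst (emb b @ [Var None]) = (\<lambda>x. b @ x)"
    by auto
  with GSB_intersection[OF G s ab e l]
  have "comb_below ar lt S (lead lt s1 @ a) (lin_ext (\<lambda>x. x @ a) s1 - lin_ext (\<lambda>x. b @ x) s2)"
    by (simp add: cong_mod_iff_comb_below subst_poly_lin_ext)
  moreover have "wfw ar (lead lt s1 @ a)"
    using GSB_lead(1)[OF mo G s(1)] ab by (simp add: wfw_iff)
  moreover have "\<forall>s\<in>S. wfw ar (lead lt s)" using GSB_lead(1)[OF mo G] by blast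
  ultimately have "comb_below ar lt S (fill c (lead lt s1 @ a))
      (lin_ext (fill c) (lin_ext (\<lambda>x. x @ a) s1 - lin_ext (\<lambda>x. b @ x) s2))"
    using comb_below_fill[OF mo _ c] by blast
  then show ?thesis by (simp add: lin_ext_diff lin_ext_lin_ext comp_def)
qed

lemma sum_remove_both:
  fixes g :: "'a \<Rightarrow> 'b \<Rightarrow> 'c::comm_monoid_add"
  assumes "finite K1" "finite K2" "M \<in> K1" "N \<in> K2"
  shows "(\<Sum>n\<in>K2. g M n) + (\<Sum>m\<in>K1 - {M}. \<Sum>n\<in>K2. g m n) =
    (\<Sum>m\<in>K1. g m N) + (\<Sum>n\<in>K2 - {N}. \<Sum>m\<in>K1. g m n)"
proof -
  have "(\<Sum>n\<in>K2. g M n) + (\<Sum>m\<in>K1 - {M}. \<Sum>n\<in>K2. g m n) = (\<Sum>m\<in>K1. \<Sum>n\<in>K2. g m n)"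
    using assms by (simp add: sum.remove)
  also have "\<dots> = (\<Sum>n\<in>K2. \<Sum>m\<in>K1. g m n)" by (rule sum.swap)
  also have "\<dots> = (\<Sum>m\<in>K1. g m N) + (\<Sum>n\<in>K2 - {N}. \<Sum>m\<in>K1. g m n)"
    using assms by (simp add: sum.remove)
  finally show ?thesis .
qed

lemma comb_below_lower_terms:
  assumes mo: "monomial_order ar lt" and G: "GSB ar lt S" and s: "s \<in> S" "p \<in> S"
    and c: "valid ar c"
    and H: "\<And>m. wfw ar m \<Longrightarrow> valid ar (H m) \<and> fill (H m) (lead lt s) = fill c m"
  shows "comb_below ar lt S (fill c (lead lt p))
    (\<Sum>m\<in>Poly_Mapping.keys p - {lead lt p}. smult_op (Poly_Mapping.lookup p m) (lin_ext (fill (H m)) s))"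
proof (rule comb_below_sum)
  fix m assume m: "m \<in> Poly_Mapping.keys p - {lead lt p}"
  then have wm: "wfw ar m" and less: "lt m (lead lt p)" using GSB_lead[OF mo G s(2)] by auto
  have "lt (fill c m) (fill c (lead lt p))"
    using monomial_orderD(4)[OF mo star_word_toword[OF c] wm GSB_lead(1)[OF mo G s(2)] less] by simp
  then have "comb_below ar lt S (fill c (lead lt p))
      (smult_op (Poly_Mapping.lookup p m) (subst_poly (toword (H m)) s))"
    using H[OF wm] s(1) by (intro comb_below_term star_word_toword) auto
  then show "comb_below ar lt S (fill c (lead lt p))
      (smult_op (Poly_Mapping.lookup p m) (lin_ext (fill (H m)) s))"
    by (simp add: subst_poly_lin_ext subst_toword_fill)
qed

text \<open>Disjoint occurrences: writing g m n for the term with m in the first and n in the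
  second hole, both substituted polynomials are partial sums of the double sum of g over the
  supports of s1 and s2, and their difference consists of lower terms only.\<close>

lemma apart_case:
  assumes mo: "monomial_order ar lt" and G: "GSB ar lt S" and s: "s1 \<in> S" "s2 \<in> S"
    and H1: "\<And>y. wfw ar y \<Longrightarrow> valid ar (H1 y)" and H2: "\<And>x. wfw ar x \<Longrightarrow> valid ar (H2 x)"
    and H: "\<And>x y. wfw ar x \<Longrightarrow> wfw ar y \<Longrightarrow> fill (H1 y) x = fill (H2 x) y"
  shows "comb_below ar lt S (fill (H1 (lead lt s2)) (lead lt s1))
    (lin_ext (fill (H1 (lead lt s2))) s1 - lin_ext (fill (H2 (lead lt s1))) s2)"
proof -
  define M N where "M = lead lt s1" and "N = lead lt s2"
  define K1 K2 where "K1 = Poly_Mapping.keys s1" and "K2 = Poly_Mapping.keys s2"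
  note L1 = GSB_lead[OF mo G s(1), folded M_def K1_def]
  note L2 = GSB_lead[OF mo G s(2), folded N_def K2_def]
  define g where "g m n = Poly_Mapping.single (fill (H1 n) m)
    (Poly_Mapping.lookup s1 m * Poly_Mapping.lookup s2 n)" for m n
  have row: "smult_op (Poly_Mapping.lookup s1 m) (lin_ext (fill (H2 m)) s2) = (\<Sum>n\<in>K2. g m n)"
    if "m \<in> K1" for m
    using that L1(4) L2(4) by (auto simp: lin_ext_def K2_def smult_op_sum smult_op_single g_def H
        intro!: sum.cong)
  have col: "smult_op (Poly_Mapping.lookup s2 n) (lin_ext (fill (H1 n)) s1) = (\<Sum>m\<in>K1. g m n)"
    if "n \<in> K2" for n
    by (auto simp: lin_ext_def K1_def smult_op_sum smult_op_single g_def mult.commute)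
  let ?T1 = "\<Sum>m\<in>K1 - {M}. smult_op (Poly_Mapping.lookup s1 m) (lin_ext (fill (H2 m)) s2)"
  let ?T2 = "\<Sum>n\<in>K2 - {N}. smult_op (Poly_Mapping.lookup s2 n) (lin_ext (fill (H1 n)) s1)"
  have "lin_ext (fill (H2 M)) s2 + ?T1 = lin_ext (fill (H1 N)) s1 + ?T2"
    using sum_remove_both[of K1 K2 M N g] row[of M] col[of N] L1(2,3) L2(2,3)
    by (simp add: K1_def K2_def row col)
  then have diff: "lin_ext (fill (H1 N)) s1 - lin_ext (fill (H2 M)) s2 = ?T1 - ?T2"
    by (simp add: algebra_simps)
  have "comb_below ar lt S (fill (H1 N) M) ?T1"
    unfolding M_def K1_def using L2(1) H1 H2 H
    by (intro comb_below_lower_terms[OF mo G s(2,1)]) (auto simp: N_def)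
  moreover have "comb_below ar lt S (fill (H2 M) N) ?T2"
    unfolding N_def K2_def using L1(1) H1 H2 H
    by (intro comb_below_lower_terms[OF mo G s]) (auto simp: M_def)
  moreover have "fill (H2 M) N = fill (H1 N) M" using H L1(1) L2(1) by simp
  ultimately have "comb_below ar lt S (fill (H1 N) M) (?T1 - ?T2)"
    by (simp add: comb_below_diff)
  with diff show ?thesis by (simp add: M_def N_def)
qed

lemma ordered_overlap_comb_below:
  assumes mo: "monomial_order ar lt" and G: "GSB ar lt S" and s: "s1 \<in> S" "s2 \<in> S"
    and c1: "valid ar c1" and ov: "ordered_overlap ar (lead lt s1) (lead lt s2) (fill c1) F2"
  shows "comb_below ar lt S (fill c1 (lead lt s1)) (lin_ext (fill c1) s1 - lin_ext F2 s2)"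
  using ov[unfolded ordered_overlap_def]
proof (elim disjE exE conjE)
  fix c assume "valid ar c" "lead lt s1 = fill c (lead lt s2)" "F2 = fill c1 \<circ> fill c"
  then show ?thesis using inclusion_case[OF mo G s c1] by simp
next
  fix H1 H2
  assume H: "\<forall>y. wfw ar y \<longrightarrow> valid ar (H1 y)" "\<forall>x. wfw ar x \<longrightarrow> valid ar (H2 x)"
    "\<forall>x y. wfw ar x \<longrightarrow> wfw ar y \<longrightarrow> fill (H1 y) x = fill (H2 x) y"
    and F: "fill c1 = fill (H1 (lead lt s2))" "F2 = fill (H2 (lead lt s1))"
  show ?thesis unfolding F using H by (intro apart_case[OF mo G s]) auto
next
  fix c a b
  assume inter: "valid ar c" "wfw ar a" "wfw ar b" "lead lt s1 @ a = b @ lead lt s2"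
    "length (lead lt s1 @ a) < length (lead lt s1) + length (lead lt s2)"
    and F: "fill c1 = (\<lambda>x. fill c (x @ a))" "F2 = (\<lambda>x. fill c (b @ x))"
  show ?thesis unfolding F using intersection_case[OF mo G s inter] by simp
qed

lemma comb_below_swap: "comb_below ar lt S W (q - p) \<Longrightarrow> comb_below ar lt S W (p - q)"
  using comb_below_smult[of ar lt S W "q - p" "- 1"] by (simp add: smult_op_minus_one)

theorem lemma3p3:
  fixes ar :: "'o \<Rightarrow> nat"
    and lt :: "('x, 'o) word \<Rightarrow> ('x, 'o) word \<Rightarrow> bool"
    and S :: "('x, 'o, 'k::comm_ring_1) opoly set"
  assumes "monomial_order ar lt"
    and "GSB ar lt S"
    and "star_word ar u1" and "star_word ar u2"
    and "s1 \<in> S" and "s2 \<in> S"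
    and "w = subst u1 (lead lt s1)" and "w = subst u2 (lead lt s2)"
  shows "cong_mod ar lt S w (subst_poly u1 s1) (subst_poly u2 s2)"
proof -
  note mo = assms(1) and G = assms(2) and s = assms(5,6)
  obtain c1 c2 where c: "valid ar c1" "u1 = toword c1" "valid ar c2" "u2 = toword c2"
    using star_word_decomp assms(3,4) by metis
  have w: "w = fill c1 (lead lt s1)" "w = fill c2 (lead lt s2)"
    using assms(7,8) c by simp_all
  have "overlap ar (lead lt s1) (lead lt s2) (fill c1) (fill c2)"
    using overlap_of_occurrences[OF c(1,3) GSB_lead(1)[OF mo G s(1)] GSB_lead(1)[OF mo G s(2)]] w
    by simp
  then have "comb_below ar lt S w (lin_ext (fill c1) s1 - lin_ext (fill c2) s2)"
    unfolding overlap_def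
  proof
    assume "ordered_overlap ar (lead lt s1) (lead lt s2) (fill c1) (fill c2)"
    with ordered_overlap_comb_below[OF mo G s c(1)] w(1) show ?thesis by simp
  next
    assume "ordered_overlap ar (lead lt s2) (lead lt s1) (fill c2) (fill c1)"
    with ordered_overlap_comb_below[OF mo G s(2,1) c(3)] w(2) show ?thesis
      by (simp add: comb_below_swap)
  qed
  then show ?thesis
    by (simp add: cong_mod_iff_comb_below subst_poly_lin_ext subst_toword_fill c)
qed

end
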